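(* Let $F$ be a field, let $M\geq 2$ be an integer, and let $\omega\in F$ be a primitive $(M-1)$-th root of unity. Let $k_1,\ldots,k_N$ be natural numbers with $\sum_{i=1}^N k_i=M$. Then in the polynomial ring $F[x_1,\ldots,x_N]$, \[ \sum_{j=1}^{M-1}\prod_{i=1}^N(\omega^j+x_i)^{k_i}=(M-1)\prod_{i=1}^N x_i^{k_i}+(M-1)\sum_{i=1}^N k_ix_i+\mathbf{1}_M(2). \]
   Context: The indicator function is $\mathbf{1}_M(x)=1$ if $x=M$ and $\mathbf{1}_M(x)=0$ if $x\neq M$; so $\mathbf{1}_M(2)$ equals $1$ if $M=2$ and $0$ otherwise. *)

theory Defs
  imports Main "HOL-Library.Poly_Mapping"
begin

text \<open>Multivariate polynomials over 'a in variables x_0, x_1, ... : a polynomial is a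
  finitely supported map from monomials (finitely supported exponent vectors
  nat \<Rightarrow>0 nat) to coefficients. Multiplication is the convolution product of
  Poly_Mapping, so this is the polynomial ring 'a[x_0, x_1, ...].\<close>
type_synonym 'a mpoly = "(nat \<Rightarrow>\<^sub>0 nat) \<Rightarrow>\<^sub>0 'a"

definition mpVar :: "nat \<Rightarrow> 'a::comm_ring_1 mpoly" where
  "mpVar i = Poly_Mapping.single (Poly_Mapping.single i 1) 1"

definition mpConst :: "'a::comm_ring_1 \<Rightarrow> 'a mpoly" where
  "mpConst c = Poly_Mapping.single 0 c"

definition primitive_root_of_unity :: "nat \<Rightarrow> 'a::field \<Rightarrow> bool" where
  "primitive_root_of_unity n w \<longleftrightarrow> 0 < n \<and> w ^ n = 1 \<and> (\<forall>d. 0 < d \<and> d < n \<longrightarrow> w ^ d \<noteq> 1)"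

definition indicator_at :: "nat \<Rightarrow> nat \<Rightarrow> 'a::comm_ring_1" where
  "indicator_at M x = (if x = M then 1 else 0)"

end

theory Submission
  imports Defs "HOL-Computational_Algebra.Polynomial"
begin

text \<open>Put \<open>Q(y) = \<Prod>\<^sub>i (y + x\<^sub>i)\<^bsup>k\<^sub>i\<^esup>\<close>, a monic polynomial of degree \<open>M\<close> in \<open>y\<close> with
  coefficients in \<open>F[x\<^sub>1, \<dots>, x\<^sub>N]\<close>, so that the left-hand side is \<open>\<Sum>\<^sub>j Q(\<omega>\<^sup>j)\<close>.
  Summing over the \<open>(M-1)\<close>-th roots of unity kills every coefficient of \<open>Q\<close> except those
  of \<open>y\<^sup>d\<close> with \<open>M - 1 dvd d\<close>, which it multiplies by \<open>M - 1\<close>. For \<open>d \<le> M\<close> these are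
  \<open>d = 0\<close> (coefficient \<open>\<Prod>\<^sub>i x\<^sub>i\<^bsup>k\<^sub>i\<^esup>\<close>), \<open>d = M - 1\<close> (coefficient \<open>\<Sum>\<^sub>i k\<^sub>i x\<^sub>i\<close>)
  and, only for \<open>M = 2\<close>, \<open>d = M\<close> (leading coefficient \<open>1\<close>).\<close>

lemma mpConst_mult: "mpConst (a * b) = (mpConst a * mpConst b :: 'a::comm_ring_1 mpoly)"
  by (simp add: mpConst_def mult_single)

lemma mpConst_power: "mpConst (a ^ n) = (mpConst a ^ n :: 'a::comm_ring_1 mpoly)"
  by (induct n) (simp add: mpConst_def, simp add: mpConst_mult)

lemma mpConst_sum: "mpConst (\<Sum>x\<in>A. f x) = (\<Sum>x\<in>A. mpConst (f x) :: 'a::comm_ring_1 mpoly)"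
  by (induct A rule: infinite_finite_induct) (simp_all add: mpConst_def single_add)

lemma sum_powers_primitive_root_of_unity:
  fixes \<omega> :: "'a::field"
  assumes "primitive_root_of_unity n \<omega>"
  shows "(\<Sum>j=1..n. (\<omega> ^ d) ^ j) = (if n dvd d then of_nat n else 0)"
proof (cases "n dvd d")
  case True
  then obtain q where "d = n * q" by blast
  then have "\<omega> ^ d = 1"
    using assms by (simp add: primitive_root_of_unity_def power_mult)
  then show ?thesis using True by simp
next
  case False
  have n: "0 < n" "\<omega> ^ n = 1"
    using assms by (simp_all add: primitive_root_of_unity_def)
  have "\<omega> ^ d = (\<omega> ^ n) ^ (d div n) * \<omega> ^ (d mod n)"
    by (simp only: power_mult[symmetric] power_add[symmetric] mult_div_mod_eq)
  also have "\<dots> = \<omega> ^ (d mod n)"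
    using n by simp
  finally have "\<omega> ^ d = \<omega> ^ (d mod n)" .
  moreover have "0 < d mod n" "d mod n < n"
    using False n(1) by (simp_all add: mod_greater_zero_iff_not_dvd)
  ultimately have "\<omega> ^ d \<noteq> 1"
    using assms by (simp add: primitive_root_of_unity_def)
  moreover have "(\<omega> ^ d) ^ n = (\<omega> ^ n) ^ d"
    by (simp only: power_mult[symmetric] mult.commute)
  ultimately show ?thesis using False n by (simp add: sum_gp)
qed

lemma sum_poly_roots_of_unity:
  fixes \<omega> :: "'a::field" and p :: "'a mpoly poly"
  assumes "primitive_root_of_unity n \<omega>"
  shows "(\<Sum>j=1..n. poly p (mpConst (\<omega> ^ j)))
       = of_nat n * (\<Sum>d | d \<le> degree p \<and> n dvd d. coeff p d)"
proof -
  have "mpConst (\<omega> ^ j) ^ d = mpConst ((\<omega> ^ d) ^ j)" for j d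
    by (simp add: mpConst_power flip: power_mult) (simp add: mult.commute)
  then have "(\<Sum>j=1..n. poly p (mpConst (\<omega> ^ j)))
      = (\<Sum>d\<le>degree p. coeff p d * mpConst (\<Sum>j=1..n. (\<omega> ^ d) ^ j))"
    by (simp add: poly_altdef sum_distrib_left mpConst_sum) (rule sum.swap)
  also have "\<dots> = (\<Sum>d\<le>degree p. if n dvd d then of_nat n * coeff p d else 0)"
    unfolding sum_powers_primitive_root_of_unity[OF assms]
    by (rule sum.cong) (simp_all add: mpConst_def mult.commute)
  also have "\<dots> = of_nat n * (\<Sum>d | d \<le> degree p \<and> n dvd d. coeff p d)"
    by (simp add: sum.inter_filter[symmetric] sum_distrib_left atMost_def conj_commute)
  finally show ?thesis .
qed

lemma coeff_1_mult:
  fixes p q :: "'a::comm_semiring_1 poly"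
  assumes "coeff p 0 = 1" "coeff q 0 = 1"
  shows "coeff (p * q) 1 = coeff p 1 + coeff q 1"
  using assms by (simp add: coeff_mult add.commute)

lemma coeff_1_power:
  fixes p :: "'a::comm_semiring_1 poly"
  assumes "coeff p 0 = 1"
  shows "coeff (p ^ n) 1 = of_nat n * coeff p 1"
proof (induct n)
  case (Suc n)
  have "coeff (p * p ^ n) 1 = coeff p 1 + coeff (p ^ n) 1"
    by (rule coeff_1_mult) (simp_all add: assms coeff_0_power)
  then show ?case using Suc by (simp add: algebra_simps)
qed simp

lemma coeff_1_prod:
  fixes f :: "'i \<Rightarrow> 'a::comm_semiring_1 poly"
  assumes "\<And>i. i \<in> A \<Longrightarrow> coeff (f i) 0 = 1"
  shows "coeff (\<Prod>i\<in>A. f i) 1 = (\<Sum>i\<in>A. coeff (f i) 1)"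
  using assms
proof (induct A rule: infinite_finite_induct)
  case (insert i A)
  have "coeff (f i * (\<Prod>i\<in>A. f i)) 1 = coeff (f i) 1 + coeff (\<Prod>i\<in>A. f i) 1"
    using insert.prems by (intro coeff_1_mult) (simp_all add: poly_0_coeff_0[symmetric] poly_prod)
  then show ?case using insert by simp
qed simp_all

lemma reflect_poly_linear: "reflect_poly [:a, 1:] = [:1, a :: 'a::comm_semiring_1:]"
proof (rule poly_eqI)
  show "coeff (reflect_poly [:a, 1:]) n = coeff [:1, a:] n" for n
    by (cases n) (auto simp: coeff_reflect_poly coeff_pCons split: nat.split)
qed

lemma degree_prod_linear_powers:
  "degree (\<Prod>i\<in>A. [:x i, 1:] ^ k i :: 'a::idom poly) = (\<Sum>i\<in>A. k i)"
  by (simp add: degree_prod_sum_eq degree_power_eq)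

lemma lead_coeff_prod_linear_powers:
  "lead_coeff (\<Prod>i\<in>A. [:x i, 1:] ^ k i :: 'a::idom poly) = 1"
  by (simp add: lead_coeff_prod lead_coeff_power)

lemma coeff_prod_linear_powers_subleading:
  fixes x :: "'i \<Rightarrow> 'a::idom"
  assumes "(\<Sum>i\<in>A. k i) = Suc n"
  shows "coeff (\<Prod>i\<in>A. [:x i, 1:] ^ k i) n = (\<Sum>i\<in>A. of_nat (k i) * x i)"
proof -
  \<comment> \<open>Reversing the coefficients turns the subleading coefficient into the linear one.\<close>
  have "coeff (\<Prod>i\<in>A. [:x i, 1:] ^ k i) n = coeff (reflect_poly (\<Prod>i\<in>A. [:x i, 1:] ^ k i)) 1"
    using assms by (simp add: coeff_reflect_poly degree_prod_linear_powers)
  also have "\<dots> = coeff (\<Prod>i\<in>A. [:1, x i:] ^ k i) 1"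
    by (simp add: reflect_poly_prod reflect_poly_power reflect_poly_linear)
  also have "\<dots> = (\<Sum>i\<in>A. coeff ([:1, x i:] ^ k i) 1)"
    by (rule coeff_1_prod) (simp add: coeff_0_power)
  also have "\<dots> = (\<Sum>i\<in>A. of_nat (k i) * x i)"
    by (rule sum.cong[OF refl], subst coeff_1_power) simp_all
  finally show ?thesis .
qed

lemma sum_upto_multiples_of_pred:
  fixes f :: "nat \<Rightarrow> 'a::comm_monoid_add"
  assumes "M \<ge> 2"
  shows "(\<Sum>d | d \<le> M \<and> M - 1 dvd d. f d) = f 0 + f (M - 1) + (if M = 2 then f M else 0)"
proof (cases "M = 2")
  case True
  then have "{d. d \<le> M \<and> M - 1 dvd d} = {0, 1, 2}" by auto
  then show ?thesis using True by (simp add: add.assoc)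
next
  case False
  have "M - 1 dvd d \<longleftrightarrow> d = 0 \<or> d = M - 1" if "d \<le> M" for d
  proof
    assume "M - 1 dvd d"
    then obtain q where q: "d = (M - 1) * q" by blast
    have "q < 2"
    proof (rule ccontr)
      assume "\<not> q < 2"
      then have "(M - 1) * 2 \<le> d" unfolding q by (intro mult_le_mono2) simp
      then show False using that assms False by linarith
    qed
    then show "d = 0 \<or> d = M - 1"
      unfolding q by (auto simp: less_2_cases_iff)
  qed auto
  then have "{d. d \<le> M \<and> M - 1 dvd d} = {0, M - 1}"
    using assms by auto
  moreover have "0 \<noteq> M - 1"
    using assms by simp
  ultimately show ?thesis using False by simp
qed

theorem lemma2:
  fixes \<omega> :: "'a::field" and M N :: nat and k :: "nat \<Rightarrow> nat"
  assumes "M \<ge> 2"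
    and "primitive_root_of_unity (M - 1) \<omega>"
    and "(\<Sum>i=1..N. k i) = M"
  shows "(\<Sum>j=1..M-1. \<Prod>i=1..N. (mpConst (\<omega> ^ j) + mpVar i) ^ k i)
       = mpConst (of_nat (M - 1)) * (\<Prod>i=1..N. mpVar i ^ k i)
         + mpConst (of_nat (M - 1)) * (\<Sum>i=1..N. mpConst (of_nat (k i)) * mpVar i)
         + mpConst (indicator_at M 2)"
proof -
  define Q where "Q = (\<Prod>i=1..N. [:mpVar i, 1:] ^ k i :: 'a mpoly poly)"
  have degree_Q: "degree Q = M"
    using assms(3) by (simp add: Q_def degree_prod_linear_powers)
  have coeff_0_Q: "coeff Q 0 = (\<Prod>i=1..N. mpVar i ^ k i)"
    by (simp add: Q_def poly_0_coeff_0[symmetric] poly_prod)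
  have coeff_pred_Q: "coeff Q (M - 1) = (\<Sum>i=1..N. of_nat (k i) * mpVar i)"
    using assms(1,3) unfolding Q_def by (intro coeff_prod_linear_powers_subleading) simp
  have coeff_M_Q: "coeff Q M = 1"
    using lead_coeff_prod_linear_powers[of mpVar k "{1..N}"] by (simp add: Q_def flip: degree_Q)
  have "(\<Sum>j=1..M-1. \<Prod>i=1..N. (mpConst (\<omega> ^ j) + mpVar i) ^ k i)
      = (\<Sum>j=1..M-1. poly Q (mpConst (\<omega> ^ j)))"
    by (simp add: Q_def poly_prod add.commute)
  also have "\<dots> = of_nat (M - 1) * (\<Sum>d | d \<le> M \<and> M - 1 dvd d. coeff Q d)"
    unfolding sum_poly_roots_of_unity[OF assms(2)] degree_Q ..
  also have "\<dots> = of_nat (M - 1) * (coeff Q 0 + coeff Q (M - 1) + (if M = 2 then coeff Q M else 0))"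
    unfolding sum_upto_multiples_of_pred[OF assms(1)] ..
  also have "\<dots> = mpConst (of_nat (M - 1)) * (\<Prod>i=1..N. mpVar i ^ k i)
         + mpConst (of_nat (M - 1)) * (\<Sum>i=1..N. mpConst (of_nat (k i)) * mpVar i)
         + mpConst (indicator_at M 2)"
    unfolding coeff_0_Q coeff_pred_Q coeff_M_Q
    by (simp add: mpConst_def indicator_at_def algebra_simps)
  finally show ?thesis .
qed

end
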